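(* Let $d\ge 1$ and $K\ge 0$ be integers, let $\nu$ be a probability distribution on $\mathcal S$, and let $\pi_0,\pi_1,\ldots,\pi_K\in\Pi$ be an arbitrary sequence of policies. Then \[ \|V^*-V^{\pi_K}\|_{1,\nu}\;\le\;\gamma^{Kd}\,\|V^*-V^{\pi_0}\|_\infty+\sum_{k=1}^{K}\gamma^{(K-k)d}\,\bigl\|T^dV^{\pi_{k-1}}-T_{\pi_k}V^{\pi_{k-1}}\bigr\|_{1,\Lambda_{\nu,k}}, \] where $\Lambda_{\nu,k}=\nu\,(P_{\pi^*})^{(K-k)d}\,\bigl[I-\gamma P_{\pi_k}\bigr]^{-1}$, i.e. $\Lambda_{\nu,k}=\sum_{t=0}^\infty\gamma^t\,\nu\,(P_{\pi^*})^{(K-k)d}(P_{\pi_k})^t$ (a finite nonnegative measure on $\mathcal S$).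
   Context: Consider a discounted infinite-horizon Markov decision process with (measurable) state space $\mathcal S$, finite action set $\mathcal A$, reward function $r:\mathcal S\times\mathcal A\to[0,R_{\max}]$, transition kernel $p(\cdot\mid s,a)$ (a probability measure on $\mathcal S$), and discount factor $\gamma\in[0,1)$. Let $V_{\max}=R_{\max}/(1-\gamma)$ and let $\mathcal F$ be the set of bounded measurable functions $\mathcal S\to[0,V_{\max}]$. Let $\Pi$ be the set of stationary deterministic (measurable) policies $\pi:\mathcal S\to\mathcal A$. For $\pi\in\Pi$, $V^\pi(s)=\mathbf E[\sum_{t\ge0}\gamma^t r(s_t,\pi(s_t))]$ with $s_0=s$, $s_{t+1}\sim p(\cdot\mid s_t,\pi(s_t))$; $V^*(s)=\sup_{\pi\in\Pi}V^\pi(s)$. Operators on $V\in\mathcal F$: $(T_\pi V)(s)=r(s,\pi(s))+\gamma\int V(\tilde s)\,p(d\tilde s\mid s,\pi(s))$; $(TV)(s)=\max_{a\in\mathcal A}[r(s,a)+\gamma\int V(\tilde s)\,p(d\tilde s\mid s,a)]$; $T^d$ denotes the $d$-fold composition of $T$. $(P_\pi V)(s)=\int V(\tilde s)\,p(d\tilde s\mid s,\pi(s))$, and for a measure $\nu$ on $\mathcal S$, $(\nu P_\pi)(d\tilde s)=\int p(d\tilde s\mid s,\pi(s))\,\nu(ds)$. It is assumed that $V^*$ is the unique fixed point of $T$ and that there is an optimal policy $\pi^*\in\Pi$ acting greedily with respect to $V^*$, so $T_{\pi^*}V^*=TV^*=V^*$ and $V^{\pi^*}=V^*$. For a nonnegative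 measure $\mu$ on $\mathcal S$ and measurable $f$, $\|f\|_{1,\mu}=\int_{\mathcal S}|f(s)|\,\mu(ds)$; $\|f\|_\infty=\sup_s|f(s)|$. *)

theory Defs
  imports "HOL-Probability.Probability"
begin

definition mdp :: "'s measure \<Rightarrow> ('s \<Rightarrow> 'a::finite \<Rightarrow> 's measure) \<Rightarrow> ('s \<Rightarrow> 'a \<Rightarrow> real) \<Rightarrow> real \<Rightarrow> real \<Rightarrow> bool" where
  "mdp M p r Rmax g \<longleftrightarrow>
     0 \<le> g \<and> g < 1 \<and>
     (\<forall>a. (\<lambda>s. r s a) \<in> borel_measurable M) \<and>
     (\<forall>s\<in>space M. \<forall>a. 0 \<le> r s a \<and> r s a \<le> Rmax) \<and>
     (\<forall>a. (\<lambda>s. p s a) \<in> M \<rightarrow>\<^sub>M prob_algebra M)"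

definition policies :: "'s measure \<Rightarrow> ('s \<Rightarrow> 'a) set" where
  "policies M = {\<pi>. \<pi> \<in> M \<rightarrow>\<^sub>M count_space UNIV}"

definition Fset :: "'s measure \<Rightarrow> real \<Rightarrow> ('s \<Rightarrow> real) set" where
  "Fset M Vmax = {V. V \<in> borel_measurable M \<and> (\<forall>s\<in>space M. 0 \<le> V s \<and> V s \<le> Vmax)}"

definition Pop :: "('s \<Rightarrow> 'a \<Rightarrow> 's measure) \<Rightarrow> ('s \<Rightarrow> 'a) \<Rightarrow> ('s \<Rightarrow> real) \<Rightarrow> 's \<Rightarrow> real" where
  "Pop p \<pi> V s = integral\<^sup>L (p s (\<pi> s)) V"

definition Tpi :: "('s \<Rightarrow> 'a \<Rightarrow> 's measure) \<Rightarrow> ('s \<Rightarrow> 'a \<Rightarrow> real) \<Rightarrow> real \<Rightarrow> ('s \<Rightarrow> 'a) \<Rightarrow> ('s \<Rightarrow> real) \<Rightarrow> 's \<Rightarrow> real" where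
  "Tpi p r g \<pi> V s = r s (\<pi> s) + g * Pop p \<pi> V s"

definition Topt :: "('s \<Rightarrow> 'a::finite \<Rightarrow> 's measure) \<Rightarrow> ('s \<Rightarrow> 'a \<Rightarrow> real) \<Rightarrow> real \<Rightarrow> ('s \<Rightarrow> real) \<Rightarrow> 's \<Rightarrow> real" where
  "Topt p r g V s = Max (range (\<lambda>a. r s a + g * integral\<^sup>L (p s a) V))"

text \<open>Value of a policy: V^pi(s) = sum_t g^t E[r(s_t, pi(s_t))], where the expected
  reward at time t of the chain started at s is ((P_pi)^t r_pi)(s).\<close>
definition Vpi :: "('s \<Rightarrow> 'a \<Rightarrow> 's measure) \<Rightarrow> ('s \<Rightarrow> 'a \<Rightarrow> real) \<Rightarrow> real \<Rightarrow> ('s \<Rightarrow> 'a) \<Rightarrow> 's \<Rightarrow> real" where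
  "Vpi p r g \<pi> s = (\<Sum>t. g ^ t * ((Pop p \<pi> ^^ t) (\<lambda>s'. r s' (\<pi> s')) s))"

definition Vstar :: "'s measure \<Rightarrow> ('s \<Rightarrow> 'a \<Rightarrow> 's measure) \<Rightarrow> ('s \<Rightarrow> 'a \<Rightarrow> real) \<Rightarrow> real \<Rightarrow> 's \<Rightarrow> real" where
  "Vstar M p r g s = (SUP \<pi>\<in>policies M. Vpi p r g \<pi> s)"

definition mPop :: "('s \<Rightarrow> 'a \<Rightarrow> 's measure) \<Rightarrow> ('s \<Rightarrow> 'a) \<Rightarrow> 's measure \<Rightarrow> 's measure" where
  "mPop p \<pi> \<mu> = \<mu> \<bind> (\<lambda>s. p s (\<pi> s))"

text \<open>Lambda_{nu,k} = sum_t g^t nu (P_pistar)^n (P_pi)^t, with n = (K-k) d.\<close>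
definition Lambda :: "'s measure \<Rightarrow> ('s \<Rightarrow> 'a \<Rightarrow> 's measure) \<Rightarrow> real \<Rightarrow> ('s \<Rightarrow> 'a) \<Rightarrow> ('s \<Rightarrow> 'a) \<Rightarrow> nat \<Rightarrow> 's measure \<Rightarrow> 's measure" where
  "Lambda M p g pistar \<pi> n \<nu> =
     measure_of (space M) (sets M)
       (\<lambda>A. \<Sum>t. ennreal (g ^ t) * emeasure ((mPop p \<pi> ^^ t) ((mPop p pistar ^^ n) \<nu>)) A)"

definition norm1 :: "'s measure \<Rightarrow> ('s \<Rightarrow> real) \<Rightarrow> real" where
  "norm1 \<mu> f = integral\<^sup>L \<mu> (\<lambda>s. \<bar>f s\<bar>)"

definition supnorm :: "'s measure \<Rightarrow> ('s \<Rightarrow> real) \<Rightarrow> real" where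
  "supnorm M f = (SUP s\<in>space M. \<bar>f s\<bar>)"

end

theory Submission imports Defs begin

text \<open>
  Let V = V^pi_(k-1), V' = V^pi_k and eps = T^d V - T_pi_k V. Since V* = T_pi* V* and
  T_pi* <= T, we have V* - T^d V <= gamma^d P_pi*^d (V* - V); with the Bellman equation
  V' = T_pi_k V' this gives, pointwise,
    V* - V' <= gamma^d P_pi*^d (V* - V) + F,   F = eps + gamma P_pi_k (V - V').
  Because V <= T^d V, F is a subsolution: F <= |eps| + gamma P_pi_k F. Integrating this
  against mu P_pi_k^t and unrolling the recursion bounds the mu-integral of F by
  sum_t gamma^t ||eps||_(1, mu P_pi_k^t), the norm of eps under mu (I - gamma P_pi_k)^-1.
  Applying this bound K times, with mu = nu P_pi*^((K-k) d) at step k, and bounding the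
  remaining integral of V* - V^pi_0 by its sup norm gives the theorem.
\<close>

definition bounded_measurable :: "'s measure \<Rightarrow> ('s \<Rightarrow> real) \<Rightarrow> bool" where
  "bounded_measurable M f \<longleftrightarrow> f \<in> borel_measurable M \<and> (\<exists>B. \<forall>s\<in>space M. \<bar>f s\<bar> \<le> B)"

lemma bounded_measurable_add:
  assumes "bounded_measurable M f" "bounded_measurable M h"
  shows "bounded_measurable M (\<lambda>s. f s + h s)"
proof -
  obtain B C where B: "\<forall>s\<in>space M. \<bar>f s\<bar> \<le> B" and C: "\<forall>s\<in>space M. \<bar>h s\<bar> \<le> C"
    using assms by (auto simp: bounded_measurable_def)
  have "\<bar>f s + h s\<bar> \<le> B + C" if "s \<in> space M" for s
    using B C that abs_triangle_ineq[of "f s" "h s"] by fastforce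
  then show ?thesis using assms by (auto simp: bounded_measurable_def)
qed

lemma bounded_measurable_diff:
  assumes "bounded_measurable M f" "bounded_measurable M h"
  shows "bounded_measurable M (\<lambda>s. f s - h s)"
proof -
  obtain B C where B: "\<forall>s\<in>space M. \<bar>f s\<bar> \<le> B" and C: "\<forall>s\<in>space M. \<bar>h s\<bar> \<le> C"
    using assms by (auto simp: bounded_measurable_def)
  have "\<bar>f s - h s\<bar> \<le> B + C" if "s \<in> space M" for s
    using B C that abs_triangle_ineq4[of "f s" "h s"] by fastforce
  then show ?thesis using assms by (auto simp: bounded_measurable_def)
qed

lemma bounded_measurable_cmult:
  assumes "bounded_measurable M f"
  shows "bounded_measurable M (\<lambda>s. c * f s)"
proof -
  obtain B where "\<forall>s\<in>space M. \<bar>f s\<bar> \<le> B" using assms by (auto simp: bounded_measurable_def)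
  then have "\<forall>s\<in>space M. \<bar>c * f s\<bar> \<le> \<bar>c\<bar> * B" by (auto simp: abs_mult intro: mult_left_mono)
  then show ?thesis using assms by (auto simp: bounded_measurable_def)
qed

lemma bounded_measurable_abs: "bounded_measurable M f \<Longrightarrow> bounded_measurable M (\<lambda>s. \<bar>f s\<bar>)"
  unfolding bounded_measurable_def by auto

lemma prob_algebra_sets_eq: "\<mu> \<in> space (prob_algebra M) \<Longrightarrow> sets \<mu> = sets M"
  by (simp add: space_prob_algebra)

lemma prob_algebra_space_eq: "\<mu> \<in> space (prob_algebra M) \<Longrightarrow> space \<mu> = space M"
  by (rule sets_eq_imp_space_eq[OF prob_algebra_sets_eq])

lemma prob_algebra_prob_space: "\<mu> \<in> space (prob_algebra M) \<Longrightarrow> prob_space \<mu>"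
  by (simp add: space_prob_algebra)

lemma integrable_bounded_measurable:
  assumes \<mu>: "\<mu> \<in> space (prob_algebra M)" and f: "bounded_measurable M f"
  shows "integrable \<mu> f"
proof -
  interpret prob_space \<mu> using \<mu> by (rule prob_algebra_prob_space)
  obtain B where "\<forall>s\<in>space M. \<bar>f s\<bar> \<le> B" and "f \<in> borel_measurable M"
    using f by (auto simp: bounded_measurable_def)
  then show ?thesis
    using prob_algebra_space_eq[OF \<mu>] prob_algebra_sets_eq[OF \<mu>]
    by (intro integrable_const_bound[where B=B]) (auto cong: measurable_cong_sets)
qed

lemma integral_mono_bounded_measurable:
  assumes "\<mu> \<in> space (prob_algebra M)" "bounded_measurable M f" "bounded_measurable M h"
    and "\<And>s. s \<in> space M \<Longrightarrow> f s \<le> h s"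
  shows "integral\<^sup>L \<mu> f \<le> integral\<^sup>L \<mu> h"
  using assms prob_algebra_space_eq[OF assms(1)]
  by (intro integral_mono integrable_bounded_measurable) auto

lemma integral_le_const_bounded_measurable:
  assumes \<mu>: "\<mu> \<in> space (prob_algebra M)" and "bounded_measurable M f"
    and "\<And>s. s \<in> space M \<Longrightarrow> f s \<le> c"
  shows "integral\<^sup>L \<mu> f \<le> c"
proof -
  interpret prob_space \<mu> using \<mu> by (rule prob_algebra_prob_space)
  show ?thesis
    using assms integrable_bounded_measurable[OF assms(1,2)] prob_algebra_space_eq[OF \<mu>]
    by (intro integral_le_const AE_I2) auto
qed

lemma integral_ge_const_bounded_measurable:
  assumes \<mu>: "\<mu> \<in> space (prob_algebra M)" and "bounded_measurable M f"
    and "\<And>s. s \<in> space M \<Longrightarrow> c \<le> f s"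
  shows "c \<le> integral\<^sup>L \<mu> f"
proof -
  interpret prob_space \<mu> using \<mu> by (rule prob_algebra_prob_space)
  show ?thesis
    using assms integrable_bounded_measurable[OF assms(1,2)] prob_algebra_space_eq[OF \<mu>]
    by (intro integral_ge_const AE_I2) auto
qed

lemma abs_integral_le_bounded_measurable:
  assumes "\<mu> \<in> space (prob_algebra M)" "bounded_measurable M f" "\<And>s. s \<in> space M \<Longrightarrow> \<bar>f s\<bar> \<le> B"
  shows "\<bar>integral\<^sup>L \<mu> f\<bar> \<le> B"
  using integral_abs_bound[of \<mu> f]
    integral_le_const_bounded_measurable[OF assms(1) bounded_measurable_abs[OF assms(2)] assms(3)]
  by linarith

lemma integral_le_supnorm:
  assumes "\<mu> \<in> space (prob_algebra M)" and f: "bounded_measurable M f"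
  shows "integral\<^sup>L \<mu> f \<le> supnorm M f"
proof (rule integral_le_const_bounded_measurable[OF assms])
  fix s assume s: "s \<in> space M"
  obtain B where "\<forall>s\<in>space M. \<bar>f s\<bar> \<le> B" using f by (auto simp: bounded_measurable_def)
  then have "bdd_above ((\<lambda>s. \<bar>f s\<bar>) ` space M)" by (auto intro: bdd_aboveI2)
  then have "\<bar>f s\<bar> \<le> supnorm M f" unfolding supnorm_def by (rule cSUP_upper[OF s])
  then show "f s \<le> supnorm M f" by simp
qed

lemma summable_power_mult_bounded:
  fixes g :: real
  assumes "0 \<le> g" "g < 1" "\<And>t. \<bar>a t\<bar> \<le> A"
  shows "summable (\<lambda>t. g ^ t * a t)"
proof (rule summable_comparison_test'[where N=0])
  show "summable (\<lambda>t. A * g ^ t)" using assms(1,2) by (intro summable_mult summable_geometric) auto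
  show "norm (g ^ t * a t) \<le> A * g ^ t" for t
  proof -
    have "\<bar>a t\<bar> * g ^ t \<le> A * g ^ t" using assms by (intro mult_right_mono) auto
    then show ?thesis using assms(1) by (simp add: abs_mult mult.commute)
  qed
qed

lemma le_suminf_of_discounted_recursion:
  fixes a b :: "nat \<Rightarrow> real"
  assumes g: "0 \<le> g" "g < 1" and rec: "\<And>t. b t \<le> a t + g * b (Suc t)"
    and bounded: "\<And>t. b t \<le> B" and summable: "summable (\<lambda>t. g ^ t * a t)"
  shows "b 0 \<le> (\<Sum>t. g ^ t * a t)"
proof -
  have unrolled: "b 0 \<le> (\<Sum>t<n. g ^ t * a t) + g ^ n * b n" for n
  proof (induction n)
    case (Suc n)
    have "g ^ n * b n \<le> g ^ n * (a n + g * b (Suc n))"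
      using rec g by (intro mult_left_mono) auto
    with Suc.IH show ?case by (simp add: algebra_simps)
  qed simp
  have "b 0 \<le> (\<Sum>t<n. g ^ t * a t) + g ^ n * B" for n
    using unrolled[of n] mult_left_mono[OF bounded[of n], of "g ^ n"] g by simp
  moreover have "(\<lambda>n. (\<Sum>t<n. g ^ t * a t) + g ^ n * B) \<longlonglongrightarrow> (\<Sum>t. g ^ t * a t) + 0 * B"
    using g by (intro tendsto_intros summable_LIMSEQ summable LIMSEQ_realpow_zero)
  ultimately show ?thesis by (intro LIMSEQ_le_const) auto
qed

lemma integral_suminf_dominated:
  fixes f :: "nat \<Rightarrow> 's \<Rightarrow> real"
  assumes \<mu>: "\<mu> \<in> space (prob_algebra M)" and f: "\<And>t. f t \<in> borel_measurable M"
    and bound: "\<And>t s. s \<in> space M \<Longrightarrow> \<bar>f t s\<bar> \<le> c t" and c: "summable c"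
  shows "(\<integral>s. (\<Sum>t. f t s) \<partial>\<mu>) = (\<Sum>t. integral\<^sup>L \<mu> (f t))"
proof (rule integral_suminf)
  have bm: "bounded_measurable M (f t)" for t
    using f bound by (auto simp: bounded_measurable_def)
  show "integrable \<mu> (f t)" for t by (rule integrable_bounded_measurable[OF \<mu> bm])
  show "AE s in \<mu>. summable (\<lambda>t. norm (f t s))"
    using bound prob_algebra_space_eq[OF \<mu>]
    by (intro AE_I2 summable_comparison_test'[OF c, where N=0]) auto
  have "norm (integral\<^sup>L \<mu> (\<lambda>s. norm (f t s))) \<le> c t" for t
    using integral_le_const_bounded_measurable[OF \<mu> bounded_measurable_abs[OF bm] bound]
    by simp
  then show "summable (\<lambda>t. integral\<^sup>L \<mu> (\<lambda>s. norm (f t s)))"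
    by (intro summable_comparison_test'[OF c, where N=0])
qed

lemma weighted_sum_measure_eq_bind:
  assumes N: "\<And>t. N t \<in> space (prob_algebra M)"
  shows "sets (density (count_space UNIV) (\<lambda>t. ennreal (w t)) \<bind> N) = sets M"
    and "measure_of (space M) (sets M) (\<lambda>A. \<Sum>t. ennreal (w t) * emeasure (N t) A)
      = density (count_space UNIV) (\<lambda>t. ennreal (w t)) \<bind> N"
proof -
  define W where "W = density (count_space UNIV) (\<lambda>t. ennreal (w t))"
  have N_meas: "N \<in> W \<rightarrow>\<^sub>M subprob_algebra M"
    using N by (auto simp: W_def space_prob_algebra space_subprob_algebra prob_space_imp_subprob_space)
  have W_nonempty: "space W \<noteq> {}" by (simp add: W_def)
  show sets_bind: "sets (W \<bind> N) = sets M"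
    by (rule sets_bind) (use N W_nonempty in \<open>auto simp: space_prob_algebra\<close>)
  have "emeasure (W \<bind> N) A = (\<Sum>t. ennreal (w t) * emeasure (N t) A)" if "A \<in> sets M" for A
  proof -
    have "emeasure (W \<bind> N) A = (\<integral>\<^sup>+t. emeasure (N t) A \<partial>W)"
      by (rule emeasure_bind[OF W_nonempty N_meas that])
    then show ?thesis by (simp add: W_def nn_integral_density nn_integral_count_space_nat)
  qed
  then show "measure_of (space M) (sets M) (\<lambda>A. \<Sum>t. ennreal (w t) * emeasure (N t) A) = W \<bind> N"
    using measure_of_of_measure[of "W \<bind> N"] sets_bind sets_eq_imp_space_eq[OF sets_bind]
    by (metis (no_types, lifting) measure_of_eq sets.sigma_sets_eq sets.space_closed)
qed

lemma integral_weighted_sum_measure: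
  assumes N: "\<And>t. N t \<in> space (prob_algebra M)" and w: "\<And>t. 0 \<le> w t" "summable w"
    and f: "bounded_measurable M f" "\<And>s. s \<in> space M \<Longrightarrow> 0 \<le> f s"
  shows "integral\<^sup>L (measure_of (space M) (sets M) (\<lambda>A. \<Sum>t. ennreal (w t) * emeasure (N t) A)) f
    = (\<Sum>t. w t * integral\<^sup>L (N t) f)"
proof -
  define W where "W = density (count_space UNIV) (\<lambda>t. ennreal (w t))"
  have N_meas: "N \<in> W \<rightarrow>\<^sub>M subprob_algebra M"
    using N by (auto simp: W_def space_prob_algebra space_subprob_algebra prob_space_imp_subprob_space)
  have sets_bind: "sets (W \<bind> N) = sets M"
    unfolding W_def by (rule weighted_sum_measure_eq_bind(1)[OF N])
  obtain B where B: "\<And>s. s \<in> space M \<Longrightarrow> f s \<le> B" and f_meas: "f \<in> borel_measurable M"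
    using f by (auto simp: bounded_measurable_def abs_le_iff)
  have integral_N: "0 \<le> integral\<^sup>L (N t) f \<and> integral\<^sup>L (N t) f \<le> B" for t
    using B f integral_le_const_bounded_measurable integral_ge_const_bounded_measurable N by blast
  have summable: "summable (\<lambda>t. w t * integral\<^sup>L (N t) f)"
    using integral_N w
    by (intro summable_comparison_test'[OF summable_mult2[OF w(2), of B], where N=0])
      (simp add: abs_mult mult_left_mono)
  have "integral\<^sup>L (W \<bind> N) f = enn2real (\<integral>\<^sup>+s. ennreal (f s) \<partial>W \<bind> N)"
    using f(2) sets_eq_imp_space_eq[OF sets_bind] f_meas sets_bind
    by (intro integral_eq_nn_integral AE_I2) (auto cong: measurable_cong_sets)
  also have "(\<integral>\<^sup>+s. ennreal (f s) \<partial>W \<bind> N) = (\<integral>\<^sup>+t. \<integral>\<^sup>+s. ennreal (f s) \<partial>N t \<partial>W)"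
    by (rule nn_integral_bind[OF _ N_meas]) (use f_meas in simp)
  also have "\<dots> = (\<Sum>t. ennreal (w t) * (\<integral>\<^sup>+s. ennreal (f s) \<partial>N t))"
    unfolding W_def by (simp add: nn_integral_density nn_integral_count_space_nat)
  also have "\<dots> = (\<Sum>t. ennreal (w t * integral\<^sup>L (N t) f))"
  proof -
    have "(\<integral>\<^sup>+s. ennreal (f s) \<partial>N t) = ennreal (integral\<^sup>L (N t) f)" for t
      by (rule nn_integral_eq_integral[OF integrable_bounded_measurable[OF N f(1)]])
        (use f(2) prob_algebra_space_eq[OF N] in \<open>auto intro!: AE_I2\<close>)
    then show ?thesis using integral_N w(1) by (simp add: ennreal_mult)
  qed
  also have "\<dots> = ennreal (\<Sum>t. w t * integral\<^sup>L (N t) f)"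
    using integral_N w(1) by (intro suminf_ennreal2 summable) auto
  also have "enn2real \<dots> = (\<Sum>t. w t * integral\<^sup>L (N t) f)"
    using integral_N w(1) by (intro enn2real_ennreal suminf_nonneg summable) auto
  finally show ?thesis
    unfolding W_def weighted_sum_measure_eq_bind(2)[OF N] .
qed

lemma sum_discounted_Suc_shift:
  fixes F :: "nat \<Rightarrow> nat \<Rightarrow> real"
  shows "(\<Sum>k=1..Suc K. g ^ ((Suc K - k) * d) * F k (n + (Suc K - k) * d))
    = g ^ d * (\<Sum>k=1..K. g ^ ((K - k) * d) * F k (n + d + (K - k) * d)) + F (Suc K) n"
proof -
  have "(\<Sum>k=1..K. g ^ ((Suc K - k) * d) * F k (n + (Suc K - k) * d))
      = g ^ d * (\<Sum>k=1..K. g ^ ((K - k) * d) * F k (n + d + (K - k) * d))"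
    unfolding sum_distrib_left by (intro sum.cong) (auto simp: Suc_diff_le power_add add.assoc)
  then show ?thesis by simp
qed

locale discounted_mdp =
  fixes M :: "'s measure" and p :: "'s \<Rightarrow> 'a::finite \<Rightarrow> 's measure"
    and r :: "'s \<Rightarrow> 'a \<Rightarrow> real" and Rmax g :: real
  assumes mdp: "mdp M p r Rmax g"
begin

lemma discount_nonneg: "0 \<le> g" and discount_less_1: "g < 1"
  using mdp by (auto simp: mdp_def)

lemma reward_bounds: "s \<in> space M \<Longrightarrow> 0 \<le> r s a \<and> r s a \<le> Rmax"
  using mdp by (auto simp: mdp_def)

lemma reward_measurable: "(\<lambda>s. r s a) \<in> borel_measurable M"
  using mdp by (auto simp: mdp_def)

lemma transition_measurable: "(\<lambda>s. p s a) \<in> M \<rightarrow>\<^sub>M prob_algebra M"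
  using mdp by (auto simp: mdp_def)

lemma transition_in_prob_algebra: "s \<in> space M \<Longrightarrow> p s a \<in> space (prob_algebra M)"
  using transition_measurable by (rule measurable_space)

lemma policy_kernel_measurable:
  "\<pi> \<in> policies M \<Longrightarrow> (\<lambda>s. p s (\<pi> s)) \<in> M \<rightarrow>\<^sub>M prob_algebra M"
  using measurable_compose_countable[where f="\<lambda>a s. p s a" and g=\<pi>, OF transition_measurable]
  by (simp add: policies_def)

lemma policy_reward_bounded_measurable:
  assumes "\<pi> \<in> policies M"
  shows "bounded_measurable M (\<lambda>s. r s (\<pi> s))"
proof -
  have "(\<lambda>s. r s (\<pi> s)) \<in> borel_measurable M"
    using measurable_compose_countable[where f="\<lambda>a s. r s a" and g=\<pi>, OF reward_measurable] assms
    by (simp add: policies_def)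
  then show ?thesis using reward_bounds unfolding bounded_measurable_def by (metis abs_of_nonneg)
qed

lemma Pop_bounds:
  assumes "bounded_measurable M f" "\<And>x. x \<in> space M \<Longrightarrow> a \<le> f x \<and> f x \<le> b" "s \<in> space M"
  shows "a \<le> Pop p \<pi> f s \<and> Pop p \<pi> f s \<le> b"
  unfolding Pop_def using assms transition_in_prob_algebra[OF assms(3)]
  by (auto intro: integral_le_const_bounded_measurable integral_ge_const_bounded_measurable)

lemma Pop_bounded_measurable:
  assumes \<pi>: "\<pi> \<in> policies M" and f: "bounded_measurable M f"
  shows "bounded_measurable M (Pop p \<pi> f)"
proof -
  obtain B where B: "\<And>s. s \<in> space M \<Longrightarrow> \<bar>f s\<bar> \<le> B" and "f \<in> borel_measurable M"
    using f by (auto simp: bounded_measurable_def)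
  have "\<bar>Pop p \<pi> f s\<bar> \<le> B" if "s \<in> space M" for s
    unfolding Pop_def by (rule abs_integral_le_bounded_measurable[OF transition_in_prob_algebra[OF that] f B])
  moreover have "Pop p \<pi> f \<in> borel_measurable M"
    unfolding Pop_def
    by (rule measurable_compose[OF measurable_prob_algebraD[OF policy_kernel_measurable[OF \<pi>]]
          integral_measurable_subprob_algebra]) fact
  ultimately show ?thesis by (auto simp: bounded_measurable_def)
qed

lemma Pop_funpow_bounded_measurable:
  "\<pi> \<in> policies M \<Longrightarrow> bounded_measurable M f \<Longrightarrow> bounded_measurable M ((Pop p \<pi> ^^ j) f)"
  by (induction j) (auto intro: Pop_bounded_measurable)

lemma Pop_mono:
  assumes "bounded_measurable M f" "bounded_measurable M h" "\<And>x. x \<in> space M \<Longrightarrow> f x \<le> h x"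
    and "s \<in> space M"
  shows "Pop p \<pi> f s \<le> Pop p \<pi> h s"
  unfolding Pop_def
  using integral_mono_bounded_measurable[OF transition_in_prob_algebra[OF assms(4)] assms(1-3)] .

lemma Pop_diff:
  assumes "bounded_measurable M f" "bounded_measurable M h" "s \<in> space M"
  shows "Pop p \<pi> (\<lambda>x. f x - h x) s = Pop p \<pi> f s - Pop p \<pi> h s"
  unfolding Pop_def using transition_in_prob_algebra[OF assms(3)] assms(1,2)
  by (intro Bochner_Integration.integral_diff integrable_bounded_measurable)

lemma Pop_cmult: "Pop p \<pi> (\<lambda>x. c * f x) s = c * Pop p \<pi> f s"
  by (simp add: Pop_def)

lemma mPop_in_prob_algebra:
  assumes "\<pi> \<in> policies M" "\<mu> \<in> space (prob_algebra M)"
  shows "mPop p \<pi> \<mu> \<in> space (prob_algebra M)"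
  using prob_space_bind'[OF assms(2) policy_kernel_measurable] sets_bind'[OF assms(2) policy_kernel_measurable]
    assms(1)
  by (simp add: mPop_def space_prob_algebra)

lemma mPop_funpow_in_prob_algebra:
  "\<pi> \<in> policies M \<Longrightarrow> \<mu> \<in> space (prob_algebra M) \<Longrightarrow> (mPop p \<pi> ^^ j) \<mu> \<in> space (prob_algebra M)"
  by (induction j) (auto intro: mPop_in_prob_algebra)

lemma integral_Pop:
  assumes \<pi>: "\<pi> \<in> policies M" and \<mu>: "\<mu> \<in> space (prob_algebra M)" and f: "bounded_measurable M f"
  shows "integral\<^sup>L \<mu> (Pop p \<pi> f) = integral\<^sup>L (mPop p \<pi> \<mu>) f"
proof -
  interpret prob_space \<mu> using \<mu> by (rule prob_algebra_prob_space)
  obtain B where B: "\<And>s. s \<in> space M \<Longrightarrow> \<bar>f s\<bar> \<le> B" and f_meas: "f \<in> borel_measurable M"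
    using f by (auto simp: bounded_measurable_def)
  have "(\<lambda>s. p s (\<pi> s)) \<in> \<mu> \<rightarrow>\<^sub>M subprob_algebra M"
    using measurable_prob_algebraD[OF policy_kernel_measurable[OF \<pi>]] prob_algebra_sets_eq[OF \<mu>]
    by (simp cong: measurable_cong_sets)
  then have "integral\<^sup>L (\<mu> \<bind> (\<lambda>s. p s (\<pi> s))) f = (\<integral>s. integral\<^sup>L (p s (\<pi> s)) f \<partial>\<mu>)"
    using transition_in_prob_algebra prob_algebra_space_eq[OF \<mu>]
    by (intro integral_bind[OF f_meas B, where B'=1])
      (auto simp: space_prob_algebra prob_space.emeasure_space_1 intro!: AE_I2 finite_measure_axioms)
  then show ?thesis by (simp add: mPop_def Pop_def[abs_def])
qed

lemma integral_Pop_funpow: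
  assumes \<pi>: "\<pi> \<in> policies M" and "\<mu> \<in> space (prob_algebra M)" and f: "bounded_measurable M f"
  shows "integral\<^sup>L \<mu> ((Pop p \<pi> ^^ j) f) = integral\<^sup>L ((mPop p \<pi> ^^ j) \<mu>) f"
  using assms(2)
proof (induction j arbitrary: \<mu>)
  case (Suc j)
  have "integral\<^sup>L \<mu> ((Pop p \<pi> ^^ Suc j) f) = integral\<^sup>L (mPop p \<pi> \<mu>) ((Pop p \<pi> ^^ j) f)"
    using integral_Pop[OF \<pi> Suc.prems Pop_funpow_bounded_measurable[OF \<pi> f]] by simp
  also have "\<dots> = integral\<^sup>L ((mPop p \<pi> ^^ Suc j) \<mu>) f"
    using Suc.IH[OF mPop_in_prob_algebra[OF \<pi> Suc.prems]] by (simp add: funpow_swap1)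
  finally show ?case .
qed simp

lemma expected_reward_bounds:
  assumes "\<pi> \<in> policies M"
  shows "bounded_measurable M ((Pop p \<pi> ^^ t) (\<lambda>s. r s (\<pi> s)))"
    and "s \<in> space M \<Longrightarrow> 0 \<le> (Pop p \<pi> ^^ t) (\<lambda>s. r s (\<pi> s)) s \<and> (Pop p \<pi> ^^ t) (\<lambda>s. r s (\<pi> s)) s \<le> Rmax"
proof -
  show bm: "bounded_measurable M ((Pop p \<pi> ^^ t) (\<lambda>s. r s (\<pi> s)))" for t
    by (intro Pop_funpow_bounded_measurable policy_reward_bounded_measurable assms)
  show "s \<in> space M \<Longrightarrow> 0 \<le> (Pop p \<pi> ^^ t) (\<lambda>s. r s (\<pi> s)) s \<and> (Pop p \<pi> ^^ t) (\<lambda>s. r s (\<pi> s)) s \<le> Rmax"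
    by (induction t arbitrary: s) (auto simp: reward_bounds intro!: Pop_bounds[OF bm])
qed

lemma Vpi_bounds:
  assumes "\<pi> \<in> policies M" "s \<in> space M"
  shows "0 \<le> Vpi p r g \<pi> s \<and> Vpi p r g \<pi> s \<le> Rmax / (1 - g)"
proof -
  let ?R = "\<lambda>t. (Pop p \<pi> ^^ t) (\<lambda>s. r s (\<pi> s)) s"
  have R: "0 \<le> ?R t" "?R t \<le> Rmax" for t using expected_reward_bounds(2)[OF assms] by auto
  have summable: "summable (\<lambda>t. g ^ t * ?R t)"
    using R discount_nonneg discount_less_1 by (intro summable_power_mult_bounded[where A=Rmax]) auto
  have "(\<Sum>t. g ^ t * ?R t) \<le> (\<Sum>t. g ^ t * Rmax)"
    using R discount_nonneg discount_less_1
    by (intro suminf_le summable summable_mult2 summable_geometric mult_left_mono) auto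
  also have "\<dots> = Rmax / (1 - g)"
    using discount_nonneg discount_less_1 by (simp add: suminf_mult2[symmetric] suminf_geometric)
  finally show ?thesis
    using R discount_nonneg unfolding Vpi_def by (auto intro: suminf_nonneg summable)
qed

lemma Vpi_bounded_measurable:
  assumes "\<pi> \<in> policies M"
  shows "bounded_measurable M (Vpi p r g \<pi>)"
proof -
  have "Vpi p r g \<pi> \<in> borel_measurable M"
    using expected_reward_bounds(1)[OF assms]
    unfolding Vpi_def[abs_def] bounded_measurable_def
    by (intro borel_measurable_suminf borel_measurable_times) auto
  moreover have "\<forall>s\<in>space M. \<bar>Vpi p r g \<pi> s\<bar> \<le> Rmax / (1 - g)"
    using Vpi_bounds[OF assms] by auto
  ultimately show ?thesis by (auto simp: bounded_measurable_def)
qed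

lemma Vpi_le_Vstar:
  assumes "\<pi> \<in> policies M" "s \<in> space M"
  shows "Vpi p r g \<pi> s \<le> Vstar M p r g s"
proof -
  have "bdd_above ((\<lambda>\<pi>. Vpi p r g \<pi> s) ` policies M)"
    using Vpi_bounds assms(2) by (auto intro: bdd_aboveI2[where M="Rmax / (1 - g)"])
  then show ?thesis unfolding Vstar_def by (rule cSUP_upper[OF assms(1)])
qed

lemma Vpi_Bellman:
  assumes \<pi>: "\<pi> \<in> policies M" and s: "s \<in> space M"
  shows "Tpi p r g \<pi> (Vpi p r g \<pi>) s = Vpi p r g \<pi> s"
proof -
  define R where "R t = (Pop p \<pi> ^^ t) (\<lambda>s. r s (\<pi> s))" for t
  have R_abs: "\<bar>g ^ t * R t' x\<bar> \<le> Rmax * g ^ t" if "x \<in> space M" for t t' x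
  proof -
    have "0 \<le> R t' x" "R t' x \<le> Rmax" using expected_reward_bounds(2)[OF \<pi> that] by (auto simp: R_def)
    then show ?thesis
      using discount_nonneg mult_right_mono[of "R t' x" Rmax "g ^ t"] by (simp add: abs_mult mult.commute)
  qed
  have summable_Rmax: "summable (\<lambda>t. Rmax * g ^ t)"
    using discount_nonneg discount_less_1 by (intro summable_mult summable_geometric) auto
  have summable: "summable (\<lambda>t. g ^ t * R (t + k) s)" for k
    using R_abs[OF s] by (intro summable_comparison_test'[OF summable_Rmax, where N=0]) auto
  have "Pop p \<pi> (Vpi p r g \<pi>) s = (\<integral>x. (\<Sum>t. g ^ t * R t x) \<partial>p s (\<pi> s))"
    by (simp add: Pop_def Vpi_def[abs_def] R_def)
  also have "\<dots> = (\<Sum>t. integral\<^sup>L (p s (\<pi> s)) (\<lambda>x. g ^ t * R t x))"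
    using expected_reward_bounds(1)[OF \<pi>, THEN bounded_measurable_cmult] R_abs
    by (intro integral_suminf_dominated[OF transition_in_prob_algebra[OF s] _ _ summable_Rmax])
      (auto simp: bounded_measurable_def R_def)
  also have "\<dots> = (\<Sum>t. g ^ t * R (Suc t) s)"
    by (simp add: R_def Pop_def)
  finally have Pop_Vpi: "Pop p \<pi> (Vpi p r g \<pi>) s = (\<Sum>t. g ^ t * R (Suc t) s)" .
  have "Vpi p r g \<pi> s = R 0 s + (\<Sum>t. g * (g ^ t * R (Suc t) s))"
    using suminf_split_head[OF summable[of 0]] by (simp add: Vpi_def R_def mult.assoc)
  also have "\<dots> = r s (\<pi> s) + g * (\<Sum>t. g ^ t * R (Suc t) s)"
    using summable[of 1] by (subst suminf_mult) (auto simp: R_def)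
  finally show ?thesis by (simp add: Tpi_def Pop_Vpi)
qed

lemma Tpi_bounded_measurable:
  "\<pi> \<in> policies M \<Longrightarrow> bounded_measurable M V \<Longrightarrow> bounded_measurable M (Tpi p r g \<pi> V)"
  unfolding Tpi_def[abs_def]
  by (intro bounded_measurable_add bounded_measurable_cmult policy_reward_bounded_measurable
      Pop_bounded_measurable)

lemma Tpi_diff:
  assumes "bounded_measurable M V" "bounded_measurable M W" "s \<in> space M"
  shows "Tpi p r g \<pi> V s - Tpi p r g \<pi> W s = g * Pop p \<pi> (\<lambda>x. V x - W x) s"
  by (simp add: Tpi_def Pop_diff[OF assms] right_diff_distrib)

lemma Topt_attained: "\<exists>a. Topt p r g V s = r s a + g * integral\<^sup>L (p s a) V"
proof -
  have "Max (range (\<lambda>a. r s a + g * integral\<^sup>L (p s a) V)) \<in> range (\<lambda>a. r s a + g * integral\<^sup>L (p s a) V)"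
    by (intro Max_in) auto
  then show ?thesis unfolding Topt_def image_iff by blast
qed

lemma Tpi_le_Topt: "Tpi p r g \<pi> V s \<le> Topt p r g V s"
  unfolding Tpi_def Pop_def Topt_def by (intro Max_ge) auto

lemma Topt_bounded_measurable:
  assumes V: "bounded_measurable M V"
  shows "bounded_measurable M (Topt p r g V)"
proof -
  obtain B where B: "\<And>s. s \<in> space M \<Longrightarrow> \<bar>V s\<bar> \<le> B" and V_meas: "V \<in> borel_measurable M"
    using V by (auto simp: bounded_measurable_def)
  have "(\<lambda>s. r s a + g * integral\<^sup>L (p s a) V) \<in> borel_measurable M" for a
    using reward_measurable
    by (intro borel_measurable_add borel_measurable_times borel_measurable_const
        measurable_compose[OF measurable_prob_algebraD[OF transition_measurable]
          integral_measurable_subprob_algebra[OF V_meas]])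
  then have "Topt p r g V \<in> borel_measurable M"
    unfolding Topt_def[abs_def] by (intro borel_measurable_Max) auto
  moreover have "\<bar>Topt p r g V s\<bar> \<le> Rmax + g * B" if s: "s \<in> space M" for s
  proof -
    obtain a where a: "Topt p r g V s = r s a + g * integral\<^sup>L (p s a) V"
      using Topt_attained by blast
    have "\<bar>integral\<^sup>L (p s a) V\<bar> \<le> B"
      by (rule abs_integral_le_bounded_measurable[OF transition_in_prob_algebra[OF s] V B])
    then have "\<bar>g * integral\<^sup>L (p s a) V\<bar> \<le> g * B"
      using discount_nonneg by (simp add: abs_mult mult_left_mono)
    then show ?thesis using reward_bounds[OF s, of a] unfolding a by linarith
  qed
  ultimately show ?thesis by (auto simp: bounded_measurable_def)
qed

lemma Topt_funpow_bounded_measurable: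
  "bounded_measurable M V \<Longrightarrow> bounded_measurable M ((Topt p r g ^^ j) V)"
  by (induction j) (auto intro: Topt_bounded_measurable)

lemma Topt_mono:
  assumes "bounded_measurable M V" "bounded_measurable M W" "\<And>x. x \<in> space M \<Longrightarrow> V x \<le> W x"
    and s: "s \<in> space M"
  shows "Topt p r g V s \<le> Topt p r g W s"
proof -
  obtain a where a: "Topt p r g V s = r s a + g * integral\<^sup>L (p s a) V"
    using Topt_attained by blast
  have "integral\<^sup>L (p s a) V \<le> integral\<^sup>L (p s a) W"
    using integral_mono_bounded_measurable[OF transition_in_prob_algebra[OF s] assms(1-3)] .
  then have "Topt p r g V s \<le> r s a + g * integral\<^sup>L (p s a) W"
    unfolding a using discount_nonneg by (simp add: mult_left_mono)
  also have "\<dots> \<le> Topt p r g W s"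
    unfolding Topt_def by (intro Max_ge) auto
  finally show ?thesis .
qed

lemma Vpi_le_Topt_funpow:
  assumes \<pi>: "\<pi> \<in> policies M"
  shows "s \<in> space M \<Longrightarrow> Vpi p r g \<pi> s \<le> (Topt p r g ^^ j) (Vpi p r g \<pi>) s"
proof (induction j arbitrary: s)
  case (Suc j)
  have "Vpi p r g \<pi> s = Tpi p r g \<pi> (Vpi p r g \<pi>) s" using Vpi_Bellman[OF \<pi> Suc.prems] by simp
  also have "\<dots> \<le> Topt p r g (Vpi p r g \<pi>) s" by (rule Tpi_le_Topt)
  also have "\<dots> \<le> Topt p r g ((Topt p r g ^^ j) (Vpi p r g \<pi>)) s"
    using Suc Vpi_bounded_measurable[OF \<pi>]
    by (intro Topt_mono Topt_funpow_bounded_measurable) auto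
  finally show ?case by simp
qed simp

lemma integral_le_suminf_of_subsolution:
  assumes \<pi>: "\<pi> \<in> policies M" and \<mu>: "\<mu> \<in> space (prob_algebra M)"
    and F: "bounded_measurable M F" and h: "bounded_measurable M h"
    and sub: "\<And>s. s \<in> space M \<Longrightarrow> F s \<le> h s + g * Pop p \<pi> F s"
  shows "integral\<^sup>L \<mu> F \<le> (\<Sum>t. g ^ t * integral\<^sup>L ((mPop p \<pi> ^^ t) \<mu>) h)"
proof -
  define N where "N t = (mPop p \<pi> ^^ t) \<mu>" for t
  have N: "N t \<in> space (prob_algebra M)" for t
    unfolding N_def by (rule mPop_funpow_in_prob_algebra[OF \<pi> \<mu>])
  have PF: "bounded_measurable M (\<lambda>s. g * Pop p \<pi> F s)"
    by (intro bounded_measurable_cmult Pop_bounded_measurable[OF \<pi> F])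
  have recursion: "integral\<^sup>L (N t) F \<le> integral\<^sup>L (N t) h + g * integral\<^sup>L (N (Suc t)) F" for t
  proof -
    have "integral\<^sup>L (N t) F \<le> integral\<^sup>L (N t) (\<lambda>s. h s + g * Pop p \<pi> F s)"
      by (intro integral_mono_bounded_measurable[OF N F] bounded_measurable_add h PF sub)
    also have "\<dots> = integral\<^sup>L (N t) h + g * integral\<^sup>L (N t) (Pop p \<pi> F)"
      by (simp add: Bochner_Integration.integral_add[OF integrable_bounded_measurable[OF N h]
            integrable_bounded_measurable[OF N PF]])
    also have "integral\<^sup>L (N t) (Pop p \<pi> F) = integral\<^sup>L (N (Suc t)) F"
      using integral_Pop[OF \<pi> N F] by (simp add: N_def)
    finally show ?thesis .
  qed
  obtain B where B: "\<And>s. s \<in> space M \<Longrightarrow> \<bar>F s\<bar> \<le> B"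
    using F by (auto simp: bounded_measurable_def)
  have bounded: "integral\<^sup>L (N t) F \<le> B" for t
    by (rule abs_le_D1[OF abs_integral_le_bounded_measurable[OF N F B]])
  obtain C where C: "\<And>s. s \<in> space M \<Longrightarrow> \<bar>h s\<bar> \<le> C"
    using h by (auto simp: bounded_measurable_def)
  have summable: "summable (\<lambda>t. g ^ t * integral\<^sup>L (N t) h)"
    by (intro summable_power_mult_bounded[where A=C] discount_nonneg discount_less_1
        abs_integral_le_bounded_measurable[OF N h C])
  have "integral\<^sup>L (N 0) F \<le> (\<Sum>t. g ^ t * integral\<^sup>L (N t) h)"
    by (rule le_suminf_of_discounted_recursion[OF discount_nonneg discount_less_1 recursion bounded summable])
  then show ?thesis by (simp add: N_def)
qed

lemma norm1_Lambda:
  assumes \<pi>: "\<pi> \<in> policies M" and pistar: "pistar \<in> policies M"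
    and \<nu>: "\<nu> \<in> space (prob_algebra M)" and f: "bounded_measurable M f"
  shows "norm1 (Lambda M p g pistar \<pi> n \<nu>) f
    = (\<Sum>t. g ^ t * norm1 ((mPop p \<pi> ^^ t) ((mPop p pistar ^^ n) \<nu>)) f)"
  unfolding norm1_def Lambda_def
  using discount_nonneg discount_less_1
  by (intro integral_weighted_sum_measure mPop_funpow_in_prob_algebra[OF \<pi>]
      mPop_funpow_in_prob_algebra[OF pistar \<nu>] bounded_measurable_abs f summable_geometric) auto

context
  fixes Vs :: "'s \<Rightarrow> real" and pistar :: "'s \<Rightarrow> 'a"
  assumes Vs: "bounded_measurable M Vs" and pistar: "pistar \<in> policies M"
    and Vs_fixpoint: "\<And>s. s \<in> space M \<Longrightarrow> Tpi p r g pistar Vs s = Vs s"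
begin

lemma value_gap_Topt_funpow_le:
  assumes V: "bounded_measurable M V"
  shows "s \<in> space M \<Longrightarrow> Vs s - (Topt p r g ^^ j) V s \<le> g ^ j * (Pop p pistar ^^ j) (\<lambda>x. Vs x - V x) s"
proof (induction j arbitrary: s)
  case (Suc j)
  define W where "W = (Topt p r g ^^ j) V"
  define Q where "Q = (Pop p pistar ^^ j) (\<lambda>x. Vs x - V x)"
  have W: "bounded_measurable M W"
    unfolding W_def by (rule Topt_funpow_bounded_measurable[OF V])
  have Q: "bounded_measurable M Q"
    unfolding Q_def by (intro Pop_funpow_bounded_measurable pistar bounded_measurable_diff Vs V)
  have "Vs s - (Topt p r g ^^ Suc j) V s \<le> Tpi p r g pistar Vs s - Tpi p r g pistar W s"
    using Vs_fixpoint[OF Suc.prems] Tpi_le_Topt[of pistar W s] by (simp add: W_def)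
  also have "\<dots> = g * Pop p pistar (\<lambda>x. Vs x - W x) s"
    by (rule Tpi_diff[OF Vs W Suc.prems])
  also have "\<dots> \<le> g * Pop p pistar (\<lambda>x. g ^ j * Q x) s"
    using Suc.IH discount_nonneg
    by (intro mult_left_mono Pop_mono bounded_measurable_diff bounded_measurable_cmult Vs W Q Suc.prems)
      (auto simp: W_def Q_def)
  also have "\<dots> = g ^ Suc j * (Pop p pistar ^^ Suc j) (\<lambda>x. Vs x - V x) s"
    by (simp add: Pop_cmult Q_def)
  finally show ?case .
qed simp

lemma value_gap_one_step:
  assumes \<pi>: "\<pi> \<in> policies M" and \<pi>': "\<pi>' \<in> policies M" and \<mu>: "\<mu> \<in> space (prob_algebra M)"
  shows "integral\<^sup>L \<mu> (\<lambda>s. Vs s - Vpi p r g \<pi>' s)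
    \<le> g ^ d * integral\<^sup>L ((mPop p pistar ^^ d) \<mu>) (\<lambda>s. Vs s - Vpi p r g \<pi> s)
      + (\<Sum>t. g ^ t * norm1 ((mPop p \<pi>' ^^ t) \<mu>)
               (\<lambda>s. (Topt p r g ^^ d) (Vpi p r g \<pi>) s - Tpi p r g \<pi>' (Vpi p r g \<pi>) s))"
proof -
  define V where "V = Vpi p r g \<pi>"
  define V' where "V' = Vpi p r g \<pi>'"
  define \<epsilon> where "\<epsilon> s = (Topt p r g ^^ d) V s - Tpi p r g \<pi>' V s" for s
  define D where "D s = V s - V' s" for s
  define F where "F s = \<epsilon> s + g * Pop p \<pi>' D s" for s
  have V: "bounded_measurable M V" and V': "bounded_measurable M V'"
    unfolding V_def V'_def by (intro Vpi_bounded_measurable \<pi> \<pi>')+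
  have \<epsilon>: "bounded_measurable M \<epsilon>"
    unfolding \<epsilon>_def[abs_def]
    by (intro bounded_measurable_diff Topt_funpow_bounded_measurable Tpi_bounded_measurable \<pi>' V)
  have D: "bounded_measurable M D"
    unfolding D_def[abs_def] by (rule bounded_measurable_diff[OF V V'])
  have F: "bounded_measurable M F"
    unfolding F_def[abs_def]
    by (intro bounded_measurable_add bounded_measurable_cmult Pop_bounded_measurable \<pi>' \<epsilon> D)
  have D_eq: "D s = (V s - Tpi p r g \<pi>' V s) + g * Pop p \<pi>' D s" if "s \<in> space M" for s
    using Vpi_Bellman[OF \<pi>' that] Tpi_diff[OF V V' that, of \<pi>']
    unfolding D_def[abs_def] V'_def by simp
  have gap: "Vs s - V' s \<le> g ^ d * (Pop p pistar ^^ d) (\<lambda>x. Vs x - V x) s + F s"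
    if "s \<in> space M" for s
    using value_gap_Topt_funpow_le[OF V that, of d] D_eq[OF that] D_def[of s]
    unfolding F_def \<epsilon>_def by linarith
  have sub: "F s \<le> \<bar>\<epsilon> s\<bar> + g * Pop p \<pi>' F s" if s: "s \<in> space M" for s
  proof -
    have "D x \<le> F x" if "x \<in> space M" for x
      using D_eq[OF that] Vpi_le_Topt_funpow[OF \<pi> that, of d]
      unfolding F_def \<epsilon>_def V_def by linarith
    then have PD_le: "Pop p \<pi>' D s \<le> Pop p \<pi>' F s" by (rule Pop_mono[OF D F _ s])
    show ?thesis
      using mult_left_mono[OF PD_le discount_nonneg] abs_ge_self[of "\<epsilon> s"] unfolding F_def[of s]
      by linarith
  qed
  have PVsV: "bounded_measurable M (\<lambda>s. g ^ d * (Pop p pistar ^^ d) (\<lambda>x. Vs x - V x) s)"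
    by (intro bounded_measurable_cmult Pop_funpow_bounded_measurable pistar bounded_measurable_diff Vs V)
  have "integral\<^sup>L \<mu> (\<lambda>s. Vs s - V' s)
      \<le> integral\<^sup>L \<mu> (\<lambda>s. g ^ d * (Pop p pistar ^^ d) (\<lambda>x. Vs x - V x) s + F s)"
    by (intro integral_mono_bounded_measurable[OF \<mu>] bounded_measurable_diff bounded_measurable_add
        Vs V' PVsV F gap)
  also have "\<dots> = g ^ d * integral\<^sup>L ((mPop p pistar ^^ d) \<mu>) (\<lambda>s. Vs s - V s) + integral\<^sup>L \<mu> F"
    using integral_Pop_funpow[OF pistar \<mu> bounded_measurable_diff[OF Vs V]]
    by (simp add: Bochner_Integration.integral_add[OF integrable_bounded_measurable[OF \<mu> PVsV]
          integrable_bounded_measurable[OF \<mu> F]])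
  finally show ?thesis
    using integral_le_suminf_of_subsolution[OF \<pi>' \<mu> F bounded_measurable_abs[OF \<epsilon>] sub]
    unfolding norm1_def V_def V'_def \<epsilon>_def by linarith
qed

lemma value_gap_multi_step:
  assumes \<pi>: "\<forall>k\<le>K. \<pi> k \<in> policies M" and \<nu>: "\<nu> \<in> space (prob_algebra M)"
  shows "integral\<^sup>L ((mPop p pistar ^^ n) \<nu>) (\<lambda>s. Vs s - Vpi p r g (\<pi> K) s)
    \<le> g ^ (K * d) * integral\<^sup>L ((mPop p pistar ^^ (n + K * d)) \<nu>) (\<lambda>s. Vs s - Vpi p r g (\<pi> 0) s)
      + (\<Sum>k=1..K. g ^ ((K - k) * d) * norm1 (Lambda M p g pistar (\<pi> k) (n + (K - k) * d) \<nu>)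
           (\<lambda>s. (Topt p r g ^^ d) (Vpi p r g (\<pi> (k - 1))) s - Tpi p r g (\<pi> k) (Vpi p r g (\<pi> (k - 1))) s))"
  using \<pi>
proof (induction K arbitrary: n)
  case (Suc K)
  let ?gap = "\<lambda>k n. integral\<^sup>L ((mPop p pistar ^^ n) \<nu>) (\<lambda>s. Vs s - Vpi p r g (\<pi> k) s)"
  let ?err = "\<lambda>k n. norm1 (Lambda M p g pistar (\<pi> k) n \<nu>)
    (\<lambda>s. (Topt p r g ^^ d) (Vpi p r g (\<pi> (k - 1))) s - Tpi p r g (\<pi> k) (Vpi p r g (\<pi> (k - 1))) s)"
  have \<pi>K: "\<pi> K \<in> policies M" and \<pi>SucK: "\<pi> (Suc K) \<in> policies M" using Suc.prems by auto
  have "(mPop p pistar ^^ d) ((mPop p pistar ^^ n) \<nu>) = (mPop p pistar ^^ (n + d)) \<nu>"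
    unfolding add.commute[of n d] funpow_add by simp
  moreover have "bounded_measurable M
      (\<lambda>s. (Topt p r g ^^ d) (Vpi p r g (\<pi> K)) s - Tpi p r g (\<pi> (Suc K)) (Vpi p r g (\<pi> K)) s)"
    by (intro bounded_measurable_diff Topt_funpow_bounded_measurable Tpi_bounded_measurable
        Vpi_bounded_measurable \<pi>K \<pi>SucK)
  ultimately have "?gap (Suc K) n \<le> g ^ d * ?gap K (n + d) + ?err (Suc K) n"
    using value_gap_one_step[OF \<pi>K \<pi>SucK mPop_funpow_in_prob_algebra[OF pistar \<nu>, of n], where d=d]
      norm1_Lambda[OF \<pi>SucK pistar \<nu>]
    by simp
  also have "\<dots> \<le> g ^ d * (g ^ (K * d) * ?gap 0 (n + d + K * d)
      + (\<Sum>k=1..K. g ^ ((K - k) * d) * ?err k (n + d + (K - k) * d))) + ?err (Suc K) n"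
    using Suc discount_nonneg by (simp add: mult_left_mono)
  also have "\<dots> = g ^ (Suc K * d) * ?gap 0 (n + Suc K * d)
      + (\<Sum>k=1..Suc K. g ^ ((Suc K - k) * d) * ?err k (n + (Suc K - k) * d))"
    by (subst sum_discounted_Suc_shift[where F = ?err]) (simp add: power_add distrib_left mult.assoc add.assoc)
  finally show ?case .
qed simp

end

end

theorem lemma1:
  fixes M :: "'s measure" and p :: "'s \<Rightarrow> 'a::finite \<Rightarrow> 's measure"
    and r :: "'s \<Rightarrow> 'a \<Rightarrow> real" and Rmax g :: real
    and pistar :: "'s \<Rightarrow> 'a" and \<pi> :: "nat \<Rightarrow> 's \<Rightarrow> 'a"
    and \<nu> :: "'s measure" and d K :: nat
  assumes mdp: "mdp M p r Rmax g"
    and Vstar_F: "Vstar M p r g \<in> Fset M (Rmax / (1 - g))"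
    and Vstar_fix: "\<forall>s\<in>space M. Topt p r g (Vstar M p r g) s = Vstar M p r g s"
    and Vstar_unique: "\<forall>V\<in>Fset M (Rmax / (1 - g)).
                          (\<forall>s\<in>space M. Topt p r g V s = V s) \<longrightarrow> (\<forall>s\<in>space M. V s = Vstar M p r g s)"
    and pistar_pol: "pistar \<in> policies M"
    and pistar_greedy: "\<forall>s\<in>space M. Tpi p r g pistar (Vstar M p r g) s = Topt p r g (Vstar M p r g) s"
    and pistar_opt: "\<forall>s\<in>space M. Vpi p r g pistar s = Vstar M p r g s"
    and d: "d \<ge> 1"
    and nu: "prob_space \<nu>" "sets \<nu> = sets M"
    and pols: "\<forall>k\<le>K. \<pi> k \<in> policies M"
  shows "norm1 \<nu> (\<lambda>s. Vstar M p r g s - Vpi p r g (\<pi> K) s)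
    \<le> g ^ (K * d) * supnorm M (\<lambda>s. Vstar M p r g s - Vpi p r g (\<pi> 0) s)
      + (\<Sum>k=1..K. g ^ ((K - k) * d) *
           norm1 (Lambda M p g pistar (\<pi> k) ((K - k) * d) \<nu>)
             (\<lambda>s. (Topt p r g ^^ d) (Vpi p r g (\<pi> (k - 1))) s
                  - Tpi p r g (\<pi> k) (Vpi p r g (\<pi> (k - 1))) s))"
proof -
  interpret discounted_mdp M p r Rmax g by (rule discounted_mdp.intro[OF mdp])
  let ?Vs = "Vstar M p r g"
  have \<nu>: "\<nu> \<in> space (prob_algebra M)" using nu by (simp add: space_prob_algebra)
  have Vs: "bounded_measurable M ?Vs"
    using Vstar_F unfolding Fset_def bounded_measurable_def
    by (auto intro!: exI[of _ "Rmax / (1 - g)"])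
  have Vs_fixpoint: "\<And>s. s \<in> space M \<Longrightarrow> Tpi p r g pistar ?Vs s = ?Vs s"
    using pistar_greedy Vstar_fix by simp
  have "norm1 \<nu> (\<lambda>s. ?Vs s - Vpi p r g (\<pi> K) s) = integral\<^sup>L \<nu> (\<lambda>s. ?Vs s - Vpi p r g (\<pi> K) s)"
    unfolding norm1_def using Vpi_le_Vstar pols prob_algebra_space_eq[OF \<nu>]
    by (intro Bochner_Integration.integral_cong) auto
  also have "\<dots> \<le> g ^ (K * d) * integral\<^sup>L ((mPop p pistar ^^ (K * d)) \<nu>) (\<lambda>s. ?Vs s - Vpi p r g (\<pi> 0) s)
      + (\<Sum>k=1..K. g ^ ((K - k) * d) * norm1 (Lambda M p g pistar (\<pi> k) ((K - k) * d) \<nu>)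
           (\<lambda>s. (Topt p r g ^^ d) (Vpi p r g (\<pi> (k - 1))) s - Tpi p r g (\<pi> k) (Vpi p r g (\<pi> (k - 1))) s))"
    using value_gap_multi_step[OF Vs pistar_pol Vs_fixpoint pols \<nu>, of 0] by simp
  moreover have "integral\<^sup>L ((mPop p pistar ^^ (K * d)) \<nu>) (\<lambda>s. ?Vs s - Vpi p r g (\<pi> 0) s)
      \<le> supnorm M (\<lambda>s. ?Vs s - Vpi p r g (\<pi> 0) s)"
    using pols
    by (intro integral_le_supnorm mPop_funpow_in_prob_algebra pistar_pol \<nu> bounded_measurable_diff Vs
        Vpi_bounded_measurable) auto
  ultimately show ?thesis
    using mult_left_mono[OF _ zero_le_power[OF discount_nonneg], of _ _ "K * d"] by fastforce
qed

end
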